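(* Let $\mathcal A_{ML}$ be the MLMC estimator based on $\{X_\ell\}$ satisfying Assumption A with $\beta>\gamma$, and suppose $V_0>0$. Then the normalized MLMC estimator satisfies the extended CLT condition; in particular $\frac{\mathcal A_{ML}(\epsilon)-\mathbb E[X_{L(\epsilon)}]}{\sqrt{\mathrm{Var}(\mathcal A_{ML}(\epsilon))}}\xrightarrow{d}\mathcal N(0,1)$ as $\epsilon\downarrow0$.
   Context: Let $(\Omega,\mathcal F,\mathbb P)$ be a probability space, $X\in L^2(\Omega)$ a real random variable and $\{X_\ell\}_{\ell=-1}^\infty\subset L^2(\Omega)$ with $X_{-1}:=0$. Put $\Delta_\ell X:=X_\ell-X_{\ell-1}$, $V_\ell:=\mathrm{Var}(\Delta_\ell X)$, and let $C_\ell>0$ denote the (given) cost of sampling $\Delta_\ell X$. Assumption A: there are positive constants $\alpha,\beta,\gamma$ with $\min(\beta,\gamma)\le 2\alpha$, and $c_\alpha>0$, such that for all $\ell\in\mathbb N_0$: $|\mathbb E[X-X_\ell]|\le c_\alpha e^{-\alpha\ell}$; $V_\ell\le C e^{-\beta\ell}$ for some constant $C>0$; and $c e^{\gamma\ell}<C_\ell<C' e^{\gamma\ell}$ for constants $0<c<C'$. Define $S_k:=\sum_{\ell=0}^k\sqrt{V_\ell C_\ell}$. MLMC estimator: for $\epsilon>0$, $L(\epsilon):=\max(\lceil \log(c_\alpha\epsilon^{-1})/\alpha\rceil,1)$, $M_\ell(\epsilon):=\max\big(\lceil \epsilon^{-2}\sqrt{V_\ell/C_\ell}\,S_{L(\epsilon)}\rceil,1\big)$,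 and $\mathcal A_{ML}(\epsilon):=\sum_{\ell=0}^{L(\epsilon)}\frac{1}{M_\ell(\epsilon)}\sum_{i=1}^{M_\ell(\epsilon)}\Delta_\ell X^i$, where the family $\{\Delta_\ell X^i\}$ is mutually independent and each $\Delta_\ell X^i$ has the law of $\Delta_\ell X$. Conventions: $0\cdot(\pm\infty)=0$, $0/0=0$. Extended CLT condition: $\frac{\mathcal A_{ML}(\epsilon)-\mathbb E[X_{L(\epsilon)}]}{\sqrt{\mathrm{Var}(\mathcal A_{ML}(\epsilon))}}\xrightarrow{d}\mathcal N(0,1)$ as $\epsilon\downarrow0$, and $\lim_{\epsilon\downarrow0}\max_{0\le\ell\le L(\epsilon)}\frac{V_\ell}{M_\ell(\epsilon)^2\,\mathrm{Var}(\mathcal A_{ML}(\epsilon))}=0$. *)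

theory Defs
  imports "HOL-Probability.Probability"
begin

fun dX :: "(nat \<Rightarrow> 'a \<Rightarrow> real) \<Rightarrow> nat \<Rightarrow> 'a \<Rightarrow> real" where
  "dX Xs 0 = Xs 0"
| "dX Xs (Suc l) = (\<lambda>\<omega>. Xs (Suc l) \<omega> - Xs l \<omega>)"

definition Var :: "'a measure \<Rightarrow> ('a \<Rightarrow> real) \<Rightarrow> real" where
  "Var M f = (\<integral>\<omega>. (f \<omega> - (\<integral>\<eta>. f \<eta> \<partial>M))\<^sup>2 \<partial>M)"

definition Lev :: "real \<Rightarrow> real \<Rightarrow> real \<Rightarrow> nat" where
  "Lev c\<^sub>\<alpha> \<alpha> \<epsilon> = nat (max (\<lceil>ln (c\<^sub>\<alpha> / \<epsilon>) / \<alpha>\<rceil>) 1)"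

definition Ssum :: "(nat \<Rightarrow> real) \<Rightarrow> (nat \<Rightarrow> real) \<Rightarrow> nat \<Rightarrow> real" where
  "Ssum V Cost k = (\<Sum>l\<le>k. sqrt (V l * Cost l))"

definition Msz :: "(nat \<Rightarrow> real) \<Rightarrow> (nat \<Rightarrow> real) \<Rightarrow> real \<Rightarrow> real \<Rightarrow> real \<Rightarrow> nat \<Rightarrow> nat" where
  "Msz V Cost c\<^sub>\<alpha> \<alpha> \<epsilon> l =
     nat (max (\<lceil>\<epsilon> powi (-2) * sqrt (V l / Cost l) * Ssum V Cost (Lev c\<^sub>\<alpha> \<alpha> \<epsilon>)\<rceil>) 1)"

text \<open>MLMC estimator built from samples Y l i (i = 1..M_l) of the level differences.\<close>
definition AML :: "(nat \<Rightarrow> nat \<Rightarrow> 'a \<Rightarrow> real) \<Rightarrow> (nat \<Rightarrow> real) \<Rightarrow> (nat \<Rightarrow> real)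
    \<Rightarrow> real \<Rightarrow> real \<Rightarrow> real \<Rightarrow> 'a \<Rightarrow> real" where
  "AML Y V Cost c\<^sub>\<alpha> \<alpha> \<epsilon> \<omega> =
     (\<Sum>l\<le>Lev c\<^sub>\<alpha> \<alpha> \<epsilon>. (1 / real (Msz V Cost c\<^sub>\<alpha> \<alpha> \<epsilon> l)) *
        (\<Sum>i=1..Msz V Cost c\<^sub>\<alpha> \<alpha> \<epsilon> l. Y l i \<omega>))"

definition Phi :: "real \<Rightarrow> real" where
  "Phi x = measure (density lborel std_normal_density) {..x}"

end

theory Submission
  imports Defs
begin

text \<open>
  Centring every sample at its level mean writes the normalised error of the estimator as a sum of
  independent centred terms (Y_{l,i} - E \<Delta>X_l) / (M_l sqrt(Var A)) whose variances add up to one.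
  Lindeberg's condition for this triangular array holds as soon as the largest normalised variance
  V_l / (M_l^2 Var A) tends to zero and the level contributions V_l / (M_l Var A) are dominated by a
  summable sequence: the Lindeberg sum is then controlled level by level and summed with Tannery's
  theorem. Both conditions follow from \<beta> > \<gamma>, which makes sqrt(V_l C_l) summable, so that
  S_L stays bounded, Var A is at least of order \<epsilon>^2 and V_l / (M_l^2 Var A) is at most of order
  \<epsilon>^q for some q > 0.
\<close>

section \<open>Gaussian approximation of triangular arrays\<close>

lemma abs_exp_neg_minus_linear_le:
  fixes y :: real
  assumes "0 \<le> y"
  shows "\<bar>exp (- y) - (1 - y)\<bar> \<le> y\<^sup>2 / 2"
proof -
  define f where "f z = 1 - z + z\<^sup>2 / 2 - exp (- z)" for z :: real
  have "f 0 \<le> f y"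
  proof (rule DERIV_nonneg_imp_nondecreasing[OF assms])
    fix z :: real
    have "(f has_real_derivative (z - 1 + exp (- z))) (at z)"
      unfolding f_def by (auto intro!: derivative_eq_intros simp: power2_eq_square)
    moreover have "0 \<le> z - 1 + exp (- z)"
      using exp_ge_add_one_self[of "- z"] by simp
    ultimately show "\<exists>d. (f has_real_derivative d) (at z) \<and> 0 \<le> d" by blast
  qed
  then have "exp (- y) \<le> 1 - y + y\<^sup>2 / 2" by (simp add: f_def)
  moreover have "1 - y \<le> exp (- y)" using exp_ge_add_one_self[of "- y"] by simp
  ultimately show ?thesis by simp
qed

lemma isCont_cdf_std_normal: "isCont (cdf std_normal_distribution) x"
proof -
  interpret real_distribution std_normal_distribution by (rule real_dist_normal_dist)
  have "AE y in lborel. y \<in> {x} \<longrightarrow> ennreal (std_normal_density y) = 0"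
    using AE_lborel_singleton[of x] by eventually_elim auto
  then have "{x} \<in> null_sets std_normal_distribution"
    by (subst null_sets_density_iff) auto
  then show ?thesis by (simp add: isCont_cdf measure_eq_0_null_sets)
qed

context prob_space
begin

lemma expectation_square_sum_indep:
  fixes U :: "'i \<Rightarrow> 'a \<Rightarrow> real"
  assumes fin: "finite I" and ind: "indep_vars (\<lambda>_. borel) U I"
    and sq: "\<And>k. k \<in> I \<Longrightarrow> integrable M (\<lambda>x. (U k x)\<^sup>2)"
    and centered: "\<And>k. k \<in> I \<Longrightarrow> expectation (U k) = 0"
  shows "expectation (\<lambda>x. (\<Sum>k\<in>I. U k x)\<^sup>2) = (\<Sum>k\<in>I. expectation (\<lambda>x. (U k x)\<^sup>2))"
proof -
  have rv: "random_variable borel (U k)" if "k \<in> I" for k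
    using ind that unfolding indep_vars_def2 by auto
  have int: "integrable M (U k)" if "k \<in> I" for k
    using square_integrable_imp_integrable[OF rv sq] that by auto
  have cross: "integrable M (\<lambda>x. U j x * U k x) \<and>
      expectation (\<lambda>x. U j x * U k x) = (if j = k then expectation (\<lambda>x. (U k x)\<^sup>2) else 0)"
    if "j \<in> I" "k \<in> I" for j k
  proof (cases "j = k")
    case True
    then show ?thesis using sq[OF that(2)] by (simp add: power2_eq_square)
  next
    case False
    have "indep_vars (\<lambda>_. borel) U {j, k}"
      using that by (intro indep_vars_subset[OF ind]) auto
    from indep_vars_sum[OF _ _ this] False
    have iv: "indep_var borel (U j) borel (U k)" by simp
    show ?thesis
      using indep_var_lebesgue_integral[OF iv] indep_var_integrable[OF iv] int that False centered
      by simp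
  qed
  have "expectation (\<lambda>x. (\<Sum>k\<in>I. U k x)\<^sup>2) = expectation (\<lambda>x. \<Sum>j\<in>I. \<Sum>k\<in>I. U j x * U k x)"
    by (simp add: power2_eq_square sum_product)
  also have "\<dots> = (\<Sum>j\<in>I. \<Sum>k\<in>I. expectation (\<lambda>x. U j x * U k x))"
    using cross by (simp add: Bochner_Integration.integral_sum integrable_sum)
  also have "\<dots> = (\<Sum>j\<in>I. \<Sum>k\<in>I. if j = k then expectation (\<lambda>x. (U k x)\<^sup>2) else 0)"
    using cross by (intro sum.cong refl) auto
  also have "\<dots> = (\<Sum>k\<in>I. expectation (\<lambda>x. (U k x)\<^sup>2))"
    using fin by simp
  finally show ?thesis .
qed

text \<open>Each factor of the characteristic function of the sum is compared with the Gaussian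
  factor exp (- t^2 s / 2), s the variance of the summand, through the common second-order
  expansion 1 - t^2 s / 2.\<close>

lemma char_sum_indep_approx_std_normal:
  fixes Z :: "'i \<Rightarrow> 'a \<Rightarrow> real"
  assumes fin: "finite I" and ind: "indep_vars (\<lambda>_. borel) Z I"
    and sq: "\<And>k. k \<in> I \<Longrightarrow> integrable M (\<lambda>x. (Z k x)\<^sup>2)"
    and centered: "\<And>k. k \<in> I \<Longrightarrow> expectation (Z k) = 0"
    and unit_var: "(\<Sum>k\<in>I. expectation (\<lambda>x. (Z k x)\<^sup>2)) = 1"
  shows "cmod (char (distr M borel (\<lambda>x. \<Sum>k\<in>I. Z k x)) t - char std_normal_distribution t)
    \<le> t\<^sup>2 / 6 * (\<Sum>k\<in>I. expectation (\<lambda>x. min (6 * (Z k x)\<^sup>2) (\<bar>t\<bar> * \<bar>Z k x\<bar> ^ 3)))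
      + t ^ 4 / 8 * (\<Sum>k\<in>I. (expectation (\<lambda>x. (Z k x)\<^sup>2))\<^sup>2)"
proof -
  have rv[measurable]: "random_variable borel (Z k)" if "k \<in> I" for k
    using ind that unfolding indep_vars_def2 by auto
  define s where "s k = expectation (\<lambda>x. (Z k x)\<^sup>2)" for k
  define \<phi> where "\<phi> k = char (distr M borel (Z k)) t" for k
  define g where "g k = complex_of_real (exp (- (t\<^sup>2 * s k / 2)))" for k
  define m where "m k = expectation (\<lambda>x. min (6 * (Z k x)\<^sup>2) (\<bar>t\<bar> * \<bar>Z k x\<bar> ^ 3))" for k
  have s_nonneg: "0 \<le> s k" for k unfolding s_def by simp
  have "(\<Prod>k\<in>I. g k) = exp (- (t\<^sup>2 / 2) * (\<Sum>k\<in>I. s k))"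
    by (simp add: g_def exp_sum[OF fin, symmetric] sum_distrib_left sum_negf flip: of_real_prod)
  then have prod_g: "(\<Prod>k\<in>I. g k) = char std_normal_distribution t"
    using unit_var by (simp add: s_def char_std_normal_distribution)
  have factor: "cmod (\<phi> k - g k) \<le> t\<^sup>2 / 6 * m k + t ^ 4 / 8 * (s k)\<^sup>2" if k: "k \<in> I" for k
  proof -
    have int: "integrable M (Z k)"
      using square_integrable_imp_integrable[OF rv sq] k by auto
    have "cmod (\<phi> k - (1 - t\<^sup>2 * s k / 2)) \<le> t\<^sup>2 / 6 * m k"
      unfolding \<phi>_def m_def
      by (rule char_approx3'[OF rv[OF k] int sq[OF k] centered[OF k]])
         (use centered[OF k] in \<open>simp_all add: s_def\<close>)
    moreover have "cmod (complex_of_real (1 - t\<^sup>2 * s k / 2) - g k) \<le> t ^ 4 / 8 * (s k)\<^sup>2"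
    proof -
      have "cmod (complex_of_real (1 - t\<^sup>2 * s k / 2) - g k)
          = \<bar>exp (- (t\<^sup>2 * s k / 2)) - (1 - t\<^sup>2 * s k / 2)\<bar>"
        unfolding g_def by (metis norm_of_real of_real_diff abs_minus_commute)
      also have "\<dots> \<le> (t\<^sup>2 * s k / 2)\<^sup>2 / 2"
        using s_nonneg by (intro abs_exp_neg_minus_linear_le) simp
      also have "\<dots> = t ^ 4 / 8 * (s k)\<^sup>2"
        by (simp add: power_mult_distrib power_divide flip: power_mult)
      finally show ?thesis .
    qed
    ultimately show ?thesis
      using norm_diff_triangle_le by blast
  qed
  have "cmod (char (distr M borel (\<lambda>x. \<Sum>k\<in>I. Z k x)) t - char std_normal_distribution t)
      = cmod ((\<Prod>k\<in>I. \<phi> k) - (\<Prod>k\<in>I. g k))"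
    by (simp add: \<phi>_def prod_g char_distr_sum[OF ind])
  also have "\<dots> \<le> (\<Sum>k\<in>I. cmod (\<phi> k - g k))"
  proof (rule norm_prod_diff)
    show "cmod (\<phi> k) \<le> 1" if "k \<in> I" for k
      unfolding \<phi>_def using that
      by (intro real_distribution.cmod_char_le_1 real_distribution_distr) auto
    show "cmod (g k) \<le> 1" for k
      using s_nonneg[of k] by (simp add: g_def)
  qed
  also have "\<dots> \<le> (\<Sum>k\<in>I. t\<^sup>2 / 6 * m k + t ^ 4 / 8 * (s k)\<^sup>2)"
    by (intro sum_mono factor)
  finally show ?thesis
    by (simp add: s_def m_def sum.distrib sum_distrib_left)
qed

theorem central_limit_theorem_triangular:
  fixes I :: "nat \<Rightarrow> 'i set" and Z :: "nat \<Rightarrow> 'i \<Rightarrow> 'a \<Rightarrow> real"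
  assumes fin: "\<And>n. finite (I n)" and ind: "\<And>n. indep_vars (\<lambda>_. borel) (Z n) (I n)"
    and sq: "\<And>n k. k \<in> I n \<Longrightarrow> integrable M (\<lambda>x. (Z n k x)\<^sup>2)"
    and centered: "\<And>n k. k \<in> I n \<Longrightarrow> expectation (Z n k) = 0"
    and unit_var: "\<And>n. (\<Sum>k\<in>I n. expectation (\<lambda>x. (Z n k x)\<^sup>2)) = 1"
    and lindeberg: "\<And>t. (\<lambda>n. \<Sum>k\<in>I n. expectation (\<lambda>x. min (6 * (Z n k x)\<^sup>2) (\<bar>t\<bar> * \<bar>Z n k x\<bar> ^ 3)))
      \<longlonglongrightarrow> 0"
    and negligible: "(\<lambda>n. \<Sum>k\<in>I n. (expectation (\<lambda>x. (Z n k x)\<^sup>2))\<^sup>2) \<longlonglongrightarrow> 0"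
  shows "weak_conv_m (\<lambda>n. distr M borel (\<lambda>x. \<Sum>k\<in>I n. Z n k x)) std_normal_distribution"
proof (rule levy_continuity)
  show "real_distribution (distr M borel (\<lambda>x. \<Sum>k\<in>I n. Z n k x))" for n
  proof (intro real_distribution_distr borel_measurable_sum)
    show "random_variable borel (Z n k)" if "k \<in> I n" for k
      using ind[of n] that unfolding indep_vars_def2 by auto
  qed
  show "real_distribution std_normal_distribution" by (rule real_dist_normal_dist)
  fix t :: real
  have "(\<lambda>n. t\<^sup>2 / 6 * (\<Sum>k\<in>I n. expectation (\<lambda>x. min (6 * (Z n k x)\<^sup>2) (\<bar>t\<bar> * \<bar>Z n k x\<bar> ^ 3)))
      + t ^ 4 / 8 * (\<Sum>k\<in>I n. (expectation (\<lambda>x. (Z n k x)\<^sup>2))\<^sup>2)) \<longlonglongrightarrow> 0"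
    using tendsto_add_zero[OF tendsto_mult_right_zero[OF lindeberg] tendsto_mult_right_zero[OF negligible]] .
  then have "(\<lambda>n. char (distr M borel (\<lambda>x. \<Sum>k\<in>I n. Z n k x)) t - char std_normal_distribution t)
      \<longlonglongrightarrow> 0"
    by (rule Lim_null_comparison[rotated])
       (intro always_eventually allI char_sum_indep_approx_std_normal[OF fin ind sq centered unit_var])
  then show "(\<lambda>n. char (distr M borel (\<lambda>x. \<Sum>k\<in>I n. Z n k x)) t) \<longlonglongrightarrow> char std_normal_distribution t"
    by (simp add: LIM_zero_iff)
qed

corollary cdf_sum_tendsto_std_normal_within:
  fixes I :: "'b::first_countable_topology \<Rightarrow> 'i set" and Z :: "'b \<Rightarrow> 'i \<Rightarrow> 'a \<Rightarrow> real"
  assumes fin: "\<And>e. finite (I e)" and ind: "\<And>e. indep_vars (\<lambda>_. borel) (Z e) (I e)"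
    and sq: "\<And>e k. k \<in> I e \<Longrightarrow> integrable M (\<lambda>x. (Z e k x)\<^sup>2)"
    and centered: "\<And>e k. k \<in> I e \<Longrightarrow> expectation (Z e k) = 0"
    and unit_var: "\<And>e. (\<Sum>k\<in>I e. expectation (\<lambda>x. (Z e k x)\<^sup>2)) = 1"
    and lindeberg: "\<And>t. ((\<lambda>e. \<Sum>k\<in>I e. expectation (\<lambda>x. min (6 * (Z e k x)\<^sup>2) (\<bar>t\<bar> * \<bar>Z e k x\<bar> ^ 3)))
      \<longlongrightarrow> 0) (at e\<^sub>0 within S)"
    and negligible: "((\<lambda>e. \<Sum>k\<in>I e. (expectation (\<lambda>x. (Z e k x)\<^sup>2))\<^sup>2) \<longlongrightarrow> 0) (at e\<^sub>0 within S)"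
  shows "((\<lambda>e. cdf (distr M borel (\<lambda>x. \<Sum>k\<in>I e. Z e k x)) x) \<longlongrightarrow> cdf std_normal_distribution x)
    (at e\<^sub>0 within S)"
  unfolding tendsto_at_iff_sequentially
proof (intro allI impI)
  fix E :: "nat \<Rightarrow> 'b"
  assume "\<forall>n. E n \<in> S - {e\<^sub>0}" "E \<longlonglongrightarrow> e\<^sub>0"
  then have E: "filterlim E (at e\<^sub>0 within S) sequentially"
    by (auto simp: filterlim_at)
  have "weak_conv_m (\<lambda>n. distr M borel (\<lambda>x. \<Sum>k\<in>I (E n). Z (E n) k x)) std_normal_distribution"
    by (rule central_limit_theorem_triangular[OF fin ind sq centered unit_var
          filterlim_compose[OF lindeberg E] filterlim_compose[OF negligible E]])
  then show "((\<lambda>e. cdf (distr M borel (\<lambda>x. \<Sum>k\<in>I e. Z e k x)) x) \<circ> E) \<longlonglongrightarrow> cdf std_normal_distribution x"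
    using isCont_cdf_std_normal by (auto simp: weak_conv_m_def weak_conv_def comp_def)
qed

end

section \<open>Multilevel estimators with independent samples\<close>

lemma integrable_square_diff:
  fixes f g :: "'a \<Rightarrow> real"
  assumes [measurable]: "f \<in> borel_measurable M" "g \<in> borel_measurable M"
    and "integrable M (\<lambda>x. (f x)\<^sup>2)" "integrable M (\<lambda>x. (g x)\<^sup>2)"
  shows "integrable M (\<lambda>x. (f x - g x)\<^sup>2)"
proof (rule Bochner_Integration.integrable_bound)
  show "integrable M (\<lambda>x. 2 * (f x)\<^sup>2 + 2 * (g x)\<^sup>2)"
    using assms(3,4) by auto
  have "(f x - g x)\<^sup>2 \<le> 2 * (f x)\<^sup>2 + 2 * (g x)\<^sup>2" for x
    using zero_le_power2[of "f x + g x"] by (simp add: power2_eq_square algebra_simps)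
  then show "AE x in M. norm ((f x - g x)\<^sup>2) \<le> norm (2 * (f x)\<^sup>2 + 2 * (g x)\<^sup>2)"
    by (intro AE_I2) simp
qed simp

definition mlmc_est :: "(nat \<Rightarrow> nat \<Rightarrow> 'a \<Rightarrow> real) \<Rightarrow> nat \<Rightarrow> (nat \<Rightarrow> nat) \<Rightarrow> 'a \<Rightarrow> real" where
  "mlmc_est Y L N \<omega> = (\<Sum>l\<le>L. (1 / real (N l)) * (\<Sum>i=1..N l. Y l i \<omega>))"

definition mlmc_var :: "(nat \<Rightarrow> real) \<Rightarrow> nat \<Rightarrow> (nat \<Rightarrow> nat) \<Rightarrow> real" where
  "mlmc_var V L N = (\<Sum>l\<le>L. V l / real (N l))"

definition mlmc_samples :: "nat \<Rightarrow> (nat \<Rightarrow> nat) \<Rightarrow> (nat \<times> nat) set" where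
  "mlmc_samples L N = Sigma {..L} (\<lambda>l. {1..N l})"

lemma AML_eq_mlmc_est: "AML Y V Cost c\<^sub>\<alpha> \<alpha> \<epsilon> = mlmc_est Y (Lev c\<^sub>\<alpha> \<alpha> \<epsilon>) (Msz V Cost c\<^sub>\<alpha> \<alpha> \<epsilon>)"
  by (simp add: AML_def mlmc_est_def fun_eq_iff)

lemma finite_mlmc_samples [simp]: "finite (mlmc_samples L N)"
  by (simp add: mlmc_samples_def)

lemma sum_mlmc_samples:
  fixes f :: "nat \<Rightarrow> real"
  shows "(\<Sum>k\<in>mlmc_samples L N. f (fst k)) = (\<Sum>l\<le>L. real (N l) * f l)"
proof -
  have "(\<Sum>k\<in>mlmc_samples L N. f (fst k)) = (\<Sum>(l, i)\<in>Sigma {..L} (\<lambda>l. {1..N l}). f l)"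
    by (simp add: mlmc_samples_def case_prod_beta)
  also have "\<dots> = (\<Sum>l\<le>L. \<Sum>i=1..N l. f l)"
    by (rule sum.Sigma[symmetric]) auto
  finally show ?thesis by simp
qed

lemma mlmc_est_eq_sum_samples:
  "mlmc_est Y L N \<omega> = (\<Sum>(l, i)\<in>mlmc_samples L N. Y l i \<omega> / real (N l))"
  unfolding mlmc_est_def mlmc_samples_def
  by (subst sum.Sigma[symmetric]) (auto simp: sum_distrib_left)

lemma sum_dX: "(\<Sum>l\<le>n. dX Xs l \<omega>) = Xs n \<omega>"
  by (induction n) auto

locale mlmc_sampling = prob_space M for M :: "'a measure" +
  fixes Xs :: "nat \<Rightarrow> 'a \<Rightarrow> real" and Y :: "nat \<Rightarrow> nat \<Rightarrow> 'a \<Rightarrow> real"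
  assumes Xs_measurable [measurable]: "\<And>l. Xs l \<in> borel_measurable M"
    and Xs_square_integrable: "\<And>l. integrable M (\<lambda>\<omega>. (Xs l \<omega>)\<^sup>2)"
    and Y_indep: "indep_vars (\<lambda>_. borel) (\<lambda>(l, i). Y l i) UNIV"
    and Y_law: "\<And>l i. distr M borel (Y l i) = distr M borel (dX Xs l)"
begin

definition level_mean :: "nat \<Rightarrow> real" where
  "level_mean l = expectation (dX Xs l)"

definition level_var :: "nat \<Rightarrow> real" where
  "level_var l = Var M (dX Xs l)"

text \<open>t^2/6 E[min (6 X^2) (|t| |X|^3)] bounds the error of the second-order expansion of the
  characteristic function of a centred X (char_approx3'); lindeberg_moment is this expectation
  for the centred level difference, with |t| scaled to r.\<close>

definition lindeberg_moment :: "nat \<Rightarrow> real \<Rightarrow> real" where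
  "lindeberg_moment l r = expectation (\<lambda>\<omega>.
     min (6 * (dX Xs l \<omega> - level_mean l)\<^sup>2) (r * \<bar>dX Xs l \<omega> - level_mean l\<bar> ^ 3))"

lemma dX_measurable [measurable]: "dX Xs l \<in> borel_measurable M"
  by (cases l) auto

lemma Y_measurable [measurable]: "Y l i \<in> borel_measurable M"
  using Y_indep unfolding indep_vars_def2 by auto

lemma square_integrable_dX: "integrable M (\<lambda>\<omega>. (dX Xs l \<omega>)\<^sup>2)"
proof (cases l)
  case (Suc m)
  then show ?thesis
    using integrable_square_diff[OF Xs_measurable Xs_measurable Xs_square_integrable Xs_square_integrable]
    by simp
qed (simp add: Xs_square_integrable)

lemma integrable_dX: "integrable M (dX Xs l)"
  by (rule square_integrable_imp_integrable[OF dX_measurable square_integrable_dX])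

lemma square_integrable_centered_dX: "integrable M (\<lambda>\<omega>. (dX Xs l \<omega> - level_mean l)\<^sup>2)"
  by (rule integrable_square_diff) (auto simp: square_integrable_dX)

lemma level_var_eq: "level_var l = expectation (\<lambda>\<omega>. (dX Xs l \<omega> - level_mean l)\<^sup>2)"
  by (simp add: level_var_def Var_def level_mean_def)

lemma level_var_nonneg: "0 \<le> level_var l"
  by (simp add: level_var_eq)

lemma integral_sample_eq_dX:
  fixes f :: "real \<Rightarrow> real"
  assumes [measurable]: "f \<in> borel_measurable borel"
  shows "expectation (\<lambda>\<omega>. f (Y l i \<omega>)) = expectation (\<lambda>\<omega>. f (dX Xs l \<omega>))"
  using integral_distr[of "Y l i" M borel f] integral_distr[of "dX Xs l" M borel f]
  by (simp add: Y_law)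

lemma integrable_sample_iff_dX:
  fixes f :: "real \<Rightarrow> real"
  assumes [measurable]: "f \<in> borel_measurable borel"
  shows "integrable M (\<lambda>\<omega>. f (Y l i \<omega>)) \<longleftrightarrow> integrable M (\<lambda>\<omega>. f (dX Xs l \<omega>))"
  using integrable_distr_eq[of "Y l i" M borel f] integrable_distr_eq[of "dX Xs l" M borel f]
  by (simp add: Y_law)

definition scaled_sample :: "(nat \<Rightarrow> nat) \<Rightarrow> real \<Rightarrow> nat \<times> nat \<Rightarrow> 'a \<Rightarrow> real" where
  "scaled_sample N s k \<omega> = (Y (fst k) (snd k) \<omega> - level_mean (fst k)) / (real (N (fst k)) * s)"

lemma scaled_sample_measurable [measurable]: "scaled_sample N s k \<in> borel_measurable M"
  unfolding scaled_sample_def[abs_def] by simp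

lemma indep_scaled_sample: "indep_vars (\<lambda>_. borel) (scaled_sample N s) I"
proof -
  have "indep_vars (\<lambda>_. borel)
      (\<lambda>k \<omega>. (\<lambda>y. (y - level_mean (fst k)) / (real (N (fst k)) * s)) ((\<lambda>(l, i). Y l i) k \<omega>)) UNIV"
    by (rule indep_vars_compose2[OF Y_indep]) auto
  also have "(\<lambda>k \<omega>. (\<lambda>y. (y - level_mean (fst k)) / (real (N (fst k)) * s)) ((\<lambda>(l, i). Y l i) k \<omega>))
      = scaled_sample N s"
    by (auto simp: fun_eq_iff scaled_sample_def case_prod_beta)
  finally show ?thesis
    by (rule indep_vars_subset) auto
qed

lemma
  shows integrable_scaled_sample_square: "integrable M (\<lambda>\<omega>. (scaled_sample N s k \<omega>)\<^sup>2)"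
    and expectation_scaled_sample: "expectation (scaled_sample N s k) = 0"
    and expectation_scaled_sample_square:
      "expectation (\<lambda>\<omega>. (scaled_sample N s k \<omega>)\<^sup>2) = level_var (fst k) / (real (N (fst k)) * s)\<^sup>2"
proof -
  obtain l i where k: "k = (l, i)" by (cases k)
  define c where "c = real (N l) * s"
  have Z: "scaled_sample N s k = (\<lambda>\<omega>. (Y l i \<omega> - level_mean l) / c)"
    by (simp add: fun_eq_iff scaled_sample_def k c_def)
  show "integrable M (\<lambda>\<omega>. (scaled_sample N s k \<omega>)\<^sup>2)"
    unfolding Z using square_integrable_centered_dX[of l]
    by (subst integrable_sample_iff_dX[of "\<lambda>y. ((y - level_mean l) / c)\<^sup>2"]) (auto simp: power_divide)
  show "expectation (scaled_sample N s k) = 0"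
    unfolding Z using integrable_dX[of l]
    by (subst integral_sample_eq_dX[of "\<lambda>y. (y - level_mean l) / c"]) (auto simp: level_mean_def prob_space)
  have "expectation (\<lambda>\<omega>. (scaled_sample N s k \<omega>)\<^sup>2) = level_var l / c\<^sup>2"
    unfolding Z by (subst integral_sample_eq_dX[of "\<lambda>y. ((y - level_mean l) / c)\<^sup>2"]) (auto simp: level_var_eq power_divide)
  then show "expectation (\<lambda>\<omega>. (scaled_sample N s k \<omega>)\<^sup>2) = level_var (fst k) / (real (N (fst k)) * s)\<^sup>2"
    by (simp add: k c_def)
qed

lemma integrable_scaled_sample: "integrable M (scaled_sample N s k)"
  by (rule square_integrable_imp_integrable[OF scaled_sample_measurable integrable_scaled_sample_square])

lemma integrable_lindeberg_integrand:
  assumes "0 \<le> r"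
  shows "integrable M (\<lambda>\<omega>. min (6 * (dX Xs l \<omega> - level_mean l)\<^sup>2) (r * \<bar>dX Xs l \<omega> - level_mean l\<bar> ^ 3))"
  by (rule Bochner_Integration.integrable_bound[where f="\<lambda>\<omega>. 6 * (dX Xs l \<omega> - level_mean l)\<^sup>2"])
     (use assms square_integrable_centered_dX in \<open>auto intro!: AE_I2\<close>)

lemma lindeberg_moment_nonneg: "0 \<le> r \<Longrightarrow> 0 \<le> lindeberg_moment l r"
  unfolding lindeberg_moment_def by (intro integral_nonneg_AE AE_I2) simp

lemma lindeberg_moment_le: "0 \<le> r \<Longrightarrow> lindeberg_moment l r \<le> 6 * level_var l"
  unfolding lindeberg_moment_def level_var_eq
  using integrable_lindeberg_integrand square_integrable_centered_dX
  by (subst integral_mult_right_zero[symmetric]) (intro integral_mono, auto)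

lemma lindeberg_moment_mono:
  assumes "0 \<le> r" "r \<le> r'"
  shows "lindeberg_moment l r \<le> lindeberg_moment l r'"
  unfolding lindeberg_moment_def using assms
  by (intro integral_mono integrable_lindeberg_integrand min.mono mult_right_mono) auto

lemma continuous_lindeberg_moment: "continuous (at 0 within {0..}) (lindeberg_moment l)"
proof -
  define D where "D \<omega> = dX Xs l \<omega> - level_mean l" for \<omega>
  have "((\<lambda>T. lindeberg_moment l (inverse T)) \<longlongrightarrow> expectation (\<lambda>\<omega>. 0)) at_top"
    unfolding lindeberg_moment_def D_def[symmetric]
  proof (rule integral_dominated_convergence_at_top[where w="\<lambda>\<omega>. 6 * (D \<omega>)\<^sup>2"])
    show "integrable M (\<lambda>\<omega>. 6 * (D \<omega>)\<^sup>2)"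
      using square_integrable_centered_dX by (simp add: D_def)
    show "AE \<omega> in M. ((\<lambda>T. min (6 * (D \<omega>)\<^sup>2) (inverse T * \<bar>D \<omega>\<bar> ^ 3)) \<longlongrightarrow> 0) at_top"
    proof (rule AE_I2)
      fix \<omega>
      have "((\<lambda>T. min (6 * (D \<omega>)\<^sup>2) (inverse T * \<bar>D \<omega>\<bar> ^ 3))
          \<longlongrightarrow> min (6 * (D \<omega>)\<^sup>2) (0 * \<bar>D \<omega>\<bar> ^ 3)) at_top"
        by (intro tendsto_intros tendsto_inverse_0_at_top filterlim_ident)
      then show "((\<lambda>T. min (6 * (D \<omega>)\<^sup>2) (inverse T * \<bar>D \<omega>\<bar> ^ 3)) \<longlongrightarrow> 0) at_top"
        by simp
    qed
    show "\<forall>\<^sub>F T in at_top. AE \<omega> in M. norm (min (6 * (D \<omega>)\<^sup>2) (inverse T * \<bar>D \<omega>\<bar> ^ 3)) \<le> 6 * (D \<omega>)\<^sup>2"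
      by (rule eventually_at_top_linorderI[of 1]) (auto intro!: AE_I2)
  qed (auto simp: D_def)
  then have "(lindeberg_moment l \<longlongrightarrow> 0) (at_right 0)"
    using filterlim_compose[OF _ filterlim_inverse_at_top_right] by force
  moreover have "lindeberg_moment l 0 = 0"
    by (simp add: lindeberg_moment_def)
  ultimately show ?thesis
    by (simp add: continuous_within at_within_Ici_at_right)
qed


lemma expectation_scaled_sample_lindeberg:
  assumes "0 < real (N (fst k)) * s"
  shows "expectation (\<lambda>\<omega>. min (6 * (scaled_sample N s k \<omega>)\<^sup>2) (\<bar>t\<bar> * \<bar>scaled_sample N s k \<omega>\<bar> ^ 3))
    = lindeberg_moment (fst k) (\<bar>t\<bar> / (real (N (fst k)) * s)) / (real (N (fst k)) * s)\<^sup>2"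
proof -
  obtain l i where k: "k = (l, i)" by (cases k)
  define c where "c = real (N l) * s"
  have c: "0 < c"
    using assms by (simp add: k c_def)
  have Z: "scaled_sample N s k = (\<lambda>\<omega>. (Y l i \<omega> - level_mean l) / c)"
    by (simp add: fun_eq_iff scaled_sample_def k c_def)
  have scale: "min (6 * (d / c)\<^sup>2) (\<bar>t\<bar> * \<bar>d / c\<bar> ^ 3) = min (6 * d\<^sup>2) (\<bar>t\<bar> / c * \<bar>d\<bar> ^ 3) / c\<^sup>2"
    for d :: real
  proof -
    have "6 * (d / c)\<^sup>2 = 6 * d\<^sup>2 / c\<^sup>2"
      by (simp add: power_divide)
    moreover have "\<bar>t\<bar> * \<bar>d / c\<bar> ^ 3 = \<bar>t\<bar> / c * \<bar>d\<bar> ^ 3 / c\<^sup>2"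
      using c by (simp add: abs_divide power_divide eval_nat_numeral field_simps)
    moreover have "min (a / c\<^sup>2) (b / c\<^sup>2) = min a b / c\<^sup>2" for a b :: real
      using c by (simp add: min_def divide_le_cancel)
    ultimately show ?thesis by (simp only:)
  qed
  have "expectation (\<lambda>\<omega>. min (6 * (scaled_sample N s k \<omega>)\<^sup>2) (\<bar>t\<bar> * \<bar>scaled_sample N s k \<omega>\<bar> ^ 3))
      = lindeberg_moment l (\<bar>t\<bar> / c) / c\<^sup>2"
    unfolding Z scale lindeberg_moment_def
    by (subst integral_sample_eq_dX[of "\<lambda>y. min (6 * (y - level_mean l)\<^sup>2) (\<bar>t\<bar> / c * \<bar>y - level_mean l\<bar> ^ 3) / c\<^sup>2"])
       simp_all
  then show ?thesis
    by (simp add: k c_def)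
qed

lemma mlmc_est_minus_expectation:
  assumes "\<And>l. 0 < N l"
  shows "mlmc_est Y L N \<omega> - expectation (Xs L) = (\<Sum>k\<in>mlmc_samples L N. scaled_sample N 1 k \<omega>)"
proof -
  have "expectation (Xs L) = expectation (\<lambda>\<omega>. \<Sum>l\<le>L. dX Xs l \<omega>)"
    by (simp add: sum_dX)
  also have "\<dots> = (\<Sum>l\<le>L. real (N l) * (level_mean l / real (N l)))"
    using assms by (simp add: integrable_dX level_mean_def)
  also have "\<dots> = (\<Sum>k\<in>mlmc_samples L N. level_mean (fst k) / real (N (fst k)))"
    by (rule sum_mlmc_samples[symmetric])
  finally show ?thesis
    by (simp add: mlmc_est_eq_sum_samples scaled_sample_def diff_divide_distrib sum_subtractf case_prod_beta)
qed

lemma variance_mlmc_est: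
  assumes N_pos: "\<And>l. 0 < N l"
  shows "Var M (mlmc_est Y L N) = mlmc_var level_var L N"
proof -
  have N_nonzero: "N l \<noteq> 0" for l
    using N_pos[of l] by simp
  have est: "mlmc_est Y L N = (\<lambda>\<omega>. (\<Sum>k\<in>mlmc_samples L N. scaled_sample N 1 k \<omega>) + expectation (Xs L))"
    using mlmc_est_minus_expectation[of N L, OF N_pos] by (simp add: diff_eq_eq fun_eq_iff)
  have "expectation (\<lambda>\<omega>. (\<Sum>k\<in>mlmc_samples L N. scaled_sample N 1 k \<omega>) + expectation (Xs L))
      = expectation (Xs L)"
    by (simp add: integrable_scaled_sample expectation_scaled_sample prob_space)
  then have "Var M (mlmc_est Y L N) = expectation (\<lambda>\<omega>. (\<Sum>k\<in>mlmc_samples L N. scaled_sample N 1 k \<omega>)\<^sup>2)"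
    by (simp add: Var_def est)
  also have "\<dots> = (\<Sum>k\<in>mlmc_samples L N. expectation (\<lambda>\<omega>. (scaled_sample N 1 k \<omega>)\<^sup>2))"
    by (simp add: expectation_square_sum_indep indep_scaled_sample integrable_scaled_sample_square
        expectation_scaled_sample)
  also have "\<dots> = (\<Sum>l\<le>L. real (N l) * (level_var l / (real (N l))\<^sup>2))"
    unfolding expectation_scaled_sample_square mult_1_right by (rule sum_mlmc_samples)
  also have "\<dots> = mlmc_var level_var L N"
    by (simp add: mlmc_var_def power2_eq_square N_nonzero)
  finally show ?thesis .
qed

lemma normalized_mlmc_est:
  assumes "\<And>l. 0 < N l"
  shows "(mlmc_est Y L N \<omega> - expectation (Xs L)) / sqrt (Var M (mlmc_est Y L N))
    = (\<Sum>k\<in>mlmc_samples L N. scaled_sample N (sqrt (mlmc_var level_var L N)) k \<omega>)"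
  using assms
  by (simp add: mlmc_est_minus_expectation variance_mlmc_est scaled_sample_def sum_divide_distrib)

lemma sum_variance_scaled_samples:
  assumes N_pos: "\<And>l. 0 < N l" and W_pos: "0 < mlmc_var level_var L N"
  shows "(\<Sum>k\<in>mlmc_samples L N.
    expectation (\<lambda>\<omega>. (scaled_sample N (sqrt (mlmc_var level_var L N)) k \<omega>)\<^sup>2)) = 1"
proof -
  define W where "W = mlmc_var level_var L N"
  have W: "0 < W"
    using W_pos by (simp add: W_def)
  have N_nonzero: "N l \<noteq> 0" for l
    using N_pos[of l] by simp
  have "(\<Sum>k\<in>mlmc_samples L N. expectation (\<lambda>\<omega>. (scaled_sample N (sqrt W) k \<omega>)\<^sup>2))
      = (\<Sum>l\<le>L. real (N l) * (level_var l / (real (N l) * sqrt W)\<^sup>2))"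
    unfolding expectation_scaled_sample_square by (rule sum_mlmc_samples)
  also have "\<dots> = (\<Sum>l\<le>L. level_var l / real (N l) / W)"
    using W by (intro sum.cong refl) (simp add: power_mult_distrib power2_eq_square N_nonzero field_simps)
  also have "\<dots> = (\<Sum>l\<le>L. level_var l / real (N l)) / W"
    by (simp add: sum_divide_distrib)
  also have "\<dots> = 1"
    using W by (simp add: W_def mlmc_var_def)
  finally show ?thesis
    by (simp add: W_def)
qed

lemma sum_lindeberg_scaled_samples:
  assumes N_pos: "\<And>l. 0 < N l" and W_pos: "0 < W"
  shows "(\<Sum>k\<in>mlmc_samples L N. expectation (\<lambda>\<omega>.
      min (6 * (scaled_sample N (sqrt W) k \<omega>)\<^sup>2) (\<bar>t\<bar> * \<bar>scaled_sample N (sqrt W) k \<omega>\<bar> ^ 3)))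
    = (\<Sum>l\<le>L. lindeberg_moment l (\<bar>t\<bar> / (real (N l) * sqrt W)) / (real (N l) * W))"
proof -
  have N_nonzero: "N l \<noteq> 0" for l
    using N_pos[of l] by simp
  have "(\<Sum>k\<in>mlmc_samples L N. expectation (\<lambda>\<omega>.
      min (6 * (scaled_sample N (sqrt W) k \<omega>)\<^sup>2) (\<bar>t\<bar> * \<bar>scaled_sample N (sqrt W) k \<omega>\<bar> ^ 3)))
    = (\<Sum>l\<le>L. real (N l) * (lindeberg_moment l (\<bar>t\<bar> / (real (N l) * sqrt W)) / (real (N l) * sqrt W)\<^sup>2))"
    using N_pos W_pos
    by (simp add: expectation_scaled_sample_lindeberg sum_mlmc_samples[where f="\<lambda>l.
          lindeberg_moment l (\<bar>t\<bar> / (real (N l) * sqrt W)) / (real (N l) * sqrt W)\<^sup>2"])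
  also have "\<dots> = (\<Sum>l\<le>L. lindeberg_moment l (\<bar>t\<bar> / (real (N l) * sqrt W)) / (real (N l) * W))"
    using W_pos by (intro sum.cong refl) (simp add: power_mult_distrib power2_eq_square N_nonzero field_simps)
  finally show ?thesis .
qed

lemma sum_square_variance_scaled_samples_le:
  assumes N_pos: "\<And>l. 0 < N l" and W_pos: "0 < mlmc_var level_var L N"
  shows "(\<Sum>k\<in>mlmc_samples L N.
      (expectation (\<lambda>\<omega>. (scaled_sample N (sqrt (mlmc_var level_var L N)) k \<omega>)\<^sup>2))\<^sup>2)
    \<le> Max ((\<lambda>l. level_var l / ((real (N l))\<^sup>2 * mlmc_var level_var L N)) ` {0..L})"
proof -
  define W where "W = mlmc_var level_var L N"
  define \<rho> where "\<rho> l = level_var l / ((real (N l))\<^sup>2 * W)" for l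
  define R where "R = Max (\<rho> ` {0..L})"
  have variance: "expectation (\<lambda>\<omega>. (scaled_sample N (sqrt W) k \<omega>)\<^sup>2) = \<rho> (fst k)" for k
    using W_pos by (simp add: expectation_scaled_sample_square \<rho>_def W_def power_mult_distrib)
  have "\<rho> l \<le> R" if "l \<le> L" for l
    unfolding R_def using that by (intro Max_ge) auto
  moreover have "0 \<le> \<rho> l" for l
    using level_var_nonneg[of l] W_pos by (simp add: \<rho>_def W_def)
  ultimately have "(\<Sum>l\<le>L. real (N l) * (\<rho> l)\<^sup>2) \<le> (\<Sum>l\<le>L. R * (real (N l) * \<rho> l))"
    by (intro sum_mono) (simp add: power2_eq_square mult_right_mono mult.left_commute)
  also have "\<dots> = R"
    using sum_variance_scaled_samples[OF N_pos W_pos, folded W_def, unfolded variance sum_mlmc_samples]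
    by (simp flip: sum_distrib_left)
  finally show ?thesis
    unfolding variance W_def[symmetric] sum_mlmc_samples[where f="\<lambda>l. (\<rho> l)\<^sup>2"]
    by (simp add: R_def \<rho>_def)
qed

lemma lindeberg_term_le:
  assumes N_pos: "0 < N" and W_pos: "0 < W" and V_pos: "0 < level_var l"
    and b: "level_var l / (real N * W) \<le> b" and R: "level_var l / ((real N)\<^sup>2 * W) \<le> R"
  shows "lindeberg_moment l (\<bar>t\<bar> / (real N * sqrt W)) / (real N * W)
    \<le> lindeberg_moment l (\<bar>t\<bar> / sqrt (level_var l) * sqrt R) * (b / level_var l)"
proof -
  have "0 < level_var l / ((real N)\<^sup>2 * W)"
    using V_pos N_pos W_pos by simp
  then have R_nonneg: "0 \<le> R"
    using R by linarith
  have "\<bar>t\<bar> / (real N * sqrt W) = \<bar>t\<bar> / sqrt (level_var l) * sqrt (level_var l / ((real N)\<^sup>2 * W))"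
    using V_pos N_pos W_pos by (simp add: real_sqrt_divide real_sqrt_mult)
  also have "\<dots> \<le> \<bar>t\<bar> / sqrt (level_var l) * sqrt R"
    using R V_pos by (intro mult_left_mono real_sqrt_le_mono) auto
  finally have "lindeberg_moment l (\<bar>t\<bar> / (real N * sqrt W)) \<le> lindeberg_moment l (\<bar>t\<bar> / sqrt (level_var l) * sqrt R)"
    using N_pos W_pos by (intro lindeberg_moment_mono) auto
  moreover have "1 / (real N * W) \<le> b / level_var l"
    using b V_pos N_pos W_pos by (simp add: field_simps)
  moreover have "0 \<le> lindeberg_moment l (\<bar>t\<bar> / sqrt (level_var l) * sqrt R)"
    using R_nonneg V_pos by (intro lindeberg_moment_nonneg) auto
  ultimately have "lindeberg_moment l (\<bar>t\<bar> / (real N * sqrt W)) * (1 / (real N * W))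
      \<le> lindeberg_moment l (\<bar>t\<bar> / sqrt (level_var l) * sqrt R) * (b / level_var l)"
    using N_pos W_pos by (intro mult_mono) auto
  then show ?thesis
    by simp
qed

lemma lindeberg_level_tendsto_zero:
  fixes L :: "'b \<Rightarrow> nat" and N :: "'b \<Rightarrow> nat \<Rightarrow> nat" and W :: "'b \<Rightarrow> real" and b :: "nat \<Rightarrow> real"
  assumes N_pos: "\<And>e l. 0 < N e l" and W_pos: "\<And>e. 0 < W e"
    and dominated: "\<forall>\<^sub>F e in F. \<forall>l. level_var l / (real (N e l) * W e) \<le> b l"
    and max_ratio: "((\<lambda>e. Max ((\<lambda>l. level_var l / ((real (N e l))\<^sup>2 * W e)) ` {0..L e})) \<longlongrightarrow> 0) F"
  shows "((\<lambda>e. if l \<le> L e then lindeberg_moment l (\<bar>t\<bar> / (real (N e l) * sqrt (W e))) / (real (N e l) * W e)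
    else 0) \<longlongrightarrow> 0) F"
    (is "(?a \<longlongrightarrow> 0) F")
proof -
  define R where "R e = Max ((\<lambda>l. level_var l / ((real (N e l))\<^sup>2 * W e)) ` {0..L e})" for e
  have r_nonneg: "0 \<le> \<bar>t\<bar> / (real (N e l) * sqrt (W e))" for e
    using N_pos[of e l] W_pos[of e] by simp
  have a_nonneg: "0 \<le> ?a e" for e
    using lindeberg_moment_nonneg[OF r_nonneg] N_pos[of e l] W_pos[of e] by simp
  have R_nonneg: "0 \<le> R e" for e
  proof -
    have "0 \<le> level_var 0 / ((real (N e 0))\<^sup>2 * W e)"
      using level_var_nonneg[of 0] W_pos[of e] by simp
    also have "\<dots> \<le> R e"
      unfolding R_def by (rule Max_ge) auto
    finally show ?thesis .
  qed
  show ?thesis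
  proof (cases "level_var l = 0")
    case True
    then have "?a e = 0" for e
      using lindeberg_moment_le[OF r_nonneg[of e], of l] lindeberg_moment_nonneg[OF r_nonneg[of e], of l]
      by simp
    then show ?thesis by simp
  next
    case False
    then have V_pos: "0 < level_var l"
      using level_var_nonneg[of l] by simp
    define s where "s e = \<bar>t\<bar> / sqrt (level_var l) * sqrt (R e)" for e
    have s_nonneg: "0 \<le> s e" for e
      unfolding s_def using R_nonneg[of e] V_pos by (intro mult_nonneg_nonneg divide_nonneg_nonneg) auto
    have "\<forall>\<^sub>F e in F. norm (?a e) \<le> lindeberg_moment l (s e) * (b l / level_var l)"
      using dominated
    proof eventually_elim
      case (elim e)
      then have b: "level_var l / (real (N e l) * W e) \<le> b l" by blast
      show ?case
      proof (cases "l \<le> L e")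
        case True
        have "level_var l / ((real (N e l))\<^sup>2 * W e) \<le> R e"
          unfolding R_def using True by (intro Max_ge) auto
        then have "lindeberg_moment l (\<bar>t\<bar> / (real (N e l) * sqrt (W e))) / (real (N e l) * W e)
            \<le> lindeberg_moment l (s e) * (b l / level_var l)"
          unfolding s_def by (rule lindeberg_term_le[OF N_pos W_pos V_pos b])
        then show ?thesis
          using True a_nonneg[of e] by simp
      next
        case False
        have "0 \<le> b l"
          using b level_var_nonneg[of l] N_pos[of e l] W_pos[of e] by (simp add: order_trans[rotated])
        then show ?thesis
          using False lindeberg_moment_nonneg[OF s_nonneg] V_pos by simp
      qed
    qed
    moreover have "((\<lambda>e. lindeberg_moment l (s e) * (b l / level_var l)) \<longlongrightarrow> 0) F"
    proof -
      have "(s \<longlongrightarrow> 0) F"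
        unfolding s_def R_def
        by (rule tendsto_mult_right_zero[OF tendsto_real_sqrt[OF max_ratio, unfolded real_sqrt_zero]])
      then have "((\<lambda>e. lindeberg_moment l (s e)) \<longlongrightarrow> lindeberg_moment l 0) F"
        using s_nonneg by (intro continuous_within_tendsto_compose'[OF continuous_lindeberg_moment]) auto
      then show ?thesis
        by (intro tendsto_mult_left_zero) (simp add: lindeberg_moment_def)
    qed
    ultimately show ?thesis
      by (rule Lim_null_comparison)
  qed
qed

lemma lindeberg_sum_tendsto_zero:
  fixes L :: "'b \<Rightarrow> nat" and N :: "'b \<Rightarrow> nat \<Rightarrow> nat" and W :: "'b \<Rightarrow> real" and b :: "nat \<Rightarrow> real"
  assumes N_pos: "\<And>e l. 0 < N e l" and W_pos: "\<And>e. 0 < W e"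
    and b: "summable b"
    and dominated: "\<forall>\<^sub>F e in F. \<forall>l. level_var l / (real (N e l) * W e) \<le> b l"
    and max_ratio: "((\<lambda>e. Max ((\<lambda>l. level_var l / ((real (N e l))\<^sup>2 * W e)) ` {0..L e})) \<longlongrightarrow> 0) F"
  shows "((\<lambda>e. \<Sum>l\<le>L e. lindeberg_moment l (\<bar>t\<bar> / (real (N e l) * sqrt (W e))) / (real (N e l) * W e))
    \<longlongrightarrow> 0) F"
proof (cases "F = bot")
  case False
  define a where "a l e = (if l \<le> L e
    then lindeberg_moment l (\<bar>t\<bar> / (real (N e l) * sqrt (W e))) / (real (N e l) * W e) else 0)" for l e
  have a_bound: "norm (a l e) \<le> 6 * b l" if "level_var l / (real (N e l) * W e) \<le> b l" for l e
  proof -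
    have "0 \<le> \<bar>t\<bar> / (real (N e l) * sqrt (W e))"
      using N_pos[of e l] W_pos[of e] by simp
    then have "0 \<le> a l e" "a l e \<le> 6 * (level_var l / (real (N e l) * W e))"
      using lindeberg_moment_nonneg lindeberg_moment_le N_pos[of e l] W_pos[of e] level_var_nonneg[of l]
      by (auto simp: a_def divide_right_mono)
    then show ?thesis
      using that by simp
  qed
  have "\<forall>\<^sub>F x in at_top \<times>\<^sub>F F. (\<lambda>_. True) (fst x)
      \<and> (\<lambda>e. \<forall>l. level_var l / (real (N e l) * W e) \<le> b l) (snd x)"
    using dominated by (intro eventually_prodI) auto
  then have bound: "\<forall>\<^sub>F (l, e) in at_top \<times>\<^sub>F F. norm (a l e) \<le> 6 * b l"
  proof eventually_elim
    case (elim x)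
    then show ?case
      using a_bound[of "fst x" "snd x"] by (simp add: case_prod_beta)
  qed
  have limit: "((\<lambda>e. a l e) \<longlongrightarrow> 0) F" for l
    unfolding a_def by (rule lindeberg_level_tendsto_zero[OF N_pos W_pos dominated max_ratio])
  have "((\<lambda>e. suminf (\<lambda>l. a l e)) \<longlongrightarrow> suminf (\<lambda>l. 0)) F"
    using tannerys_theorem[OF limit bound summable_mult[OF b] False] by simp
  moreover have "(\<lambda>l. a l e) sums (\<Sum>l\<le>L e. lindeberg_moment l (\<bar>t\<bar> / (real (N e l) * sqrt (W e)))
      / (real (N e l) * W e))" for e
    using sums_If_finite_set[of "{..L e}"] by (simp add: a_def)
  ultimately show ?thesis
    by (simp add: sums_iff)
qed simp

theorem mlmc_est_clt:
  fixes L :: "'b::first_countable_topology \<Rightarrow> nat" and N :: "'b \<Rightarrow> nat \<Rightarrow> nat" and b :: "nat \<Rightarrow> real"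
  assumes N_pos: "\<And>e l. 0 < N e l"
    and var_pos: "\<And>e. 0 < mlmc_var level_var (L e) (N e)"
    and b: "summable b"
    and dominated: "\<forall>\<^sub>F e in at e\<^sub>0 within S.
      \<forall>l. level_var l / (real (N e l) * mlmc_var level_var (L e) (N e)) \<le> b l"
    and max_ratio: "((\<lambda>e. Max ((\<lambda>l. level_var l / ((real (N e l))\<^sup>2 * mlmc_var level_var (L e) (N e)))
      ` {0..L e})) \<longlongrightarrow> 0) (at e\<^sub>0 within S)"
  shows "((\<lambda>e. measure M {\<omega> \<in> space M. (mlmc_est Y (L e) (N e) \<omega> - expectation (Xs (L e)))
      / sqrt (Var M (mlmc_est Y (L e) (N e))) \<le> x}) \<longlongrightarrow> cdf std_normal_distribution x) (at e\<^sub>0 within S)"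
proof -
  define Z where "Z e = scaled_sample (N e) (sqrt (mlmc_var level_var (L e) (N e)))" for e
  have "{\<omega> \<in> space M. (mlmc_est Y (L e) (N e) \<omega> - expectation (Xs (L e)))
      / sqrt (Var M (mlmc_est Y (L e) (N e))) \<le> x}
      = (\<lambda>\<omega>. \<Sum>k\<in>mlmc_samples (L e) (N e). Z e k \<omega>) -` {..x} \<inter> space M" for e
    using normalized_mlmc_est[OF N_pos] by (auto simp: Z_def)
  then have cdf: "measure M {\<omega> \<in> space M. (mlmc_est Y (L e) (N e) \<omega> - expectation (Xs (L e)))
      / sqrt (Var M (mlmc_est Y (L e) (N e))) \<le> x}
      = cdf (distr M borel (\<lambda>\<omega>. \<Sum>k\<in>mlmc_samples (L e) (N e). Z e k \<omega>)) x" for e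
    by (simp add: cdf_def measure_distr Z_def)
  show ?thesis
    unfolding cdf
  proof (rule cdf_sum_tendsto_std_normal_within)
    show "((\<lambda>e. \<Sum>k\<in>mlmc_samples (L e) (N e).
        expectation (\<lambda>\<omega>. min (6 * (Z e k \<omega>)\<^sup>2) (\<bar>t\<bar> * \<bar>Z e k \<omega>\<bar> ^ 3))) \<longlongrightarrow> 0) (at e\<^sub>0 within S)" for t
      unfolding Z_def sum_lindeberg_scaled_samples[OF N_pos var_pos]
      using N_pos var_pos b dominated max_ratio by (rule lindeberg_sum_tendsto_zero)
    show "((\<lambda>e. \<Sum>k\<in>mlmc_samples (L e) (N e). (expectation (\<lambda>\<omega>. (Z e k \<omega>)\<^sup>2))\<^sup>2) \<longlongrightarrow> 0)
        (at e\<^sub>0 within S)"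
      by (rule tendsto_sandwich[OF _ _ tendsto_const max_ratio])
         (simp_all add: Z_def sum_nonneg sum_square_variance_scaled_samples_le[OF N_pos var_pos])
  qed (simp_all add: Z_def indep_scaled_sample integrable_scaled_sample_square expectation_scaled_sample
      sum_variance_scaled_samples[OF N_pos var_pos])
qed

end

section \<open>Sample sizes under Assumption A with \<beta> > \<gamma>\<close>

lemma le_exp_convex_combination:
  fixes x u v p :: real
  assumes "x \<le> exp u" "x \<le> exp v" "0 \<le> p" "p \<le> 1"
  shows "x \<le> exp (p * u + (1 - p) * v)"
proof -
  have "min u v \<le> p * u + (1 - p) * v"
  proof (cases "u \<le> v")
    case True
    then have "0 \<le> (1 - p) * (v - u)" using assms(4) by simp
    then show ?thesis using True by (simp add: algebra_simps)
  next
    case False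
    then have "0 \<le> p * (u - v)" using assms(3) by simp
    then show ?thesis using False by (simp add: algebra_simps)
  qed
  then have "exp (min u v) \<le> exp (p * u + (1 - p) * v)"
    by simp
  moreover have "x \<le> exp (min u v)"
    using assms(1,2) by (simp add: min_def)
  ultimately show ?thesis
    by linarith
qed

locale mlmc_rates =
  fixes V Cost :: "nat \<Rightarrow> real" and c\<^sub>\<alpha> \<alpha> \<beta> \<gamma> C c C' :: real
  assumes V_nonneg: "\<And>l. 0 \<le> V l" and V0_pos: "0 < V 0"
    and var_decay: "\<And>l. V l \<le> C * exp (- \<beta> * real l)"
    and cost_lower: "\<And>l. c * exp (\<gamma> * real l) < Cost l"
    and cost_upper: "\<And>l. Cost l < C' * exp (\<gamma> * real l)"
    and c_pos: "0 < c" and gamma_pos: "0 < \<gamma>" and gamma_less_beta: "\<gamma> < \<beta>"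
begin

abbreviation "levels \<epsilon> \<equiv> Lev c\<^sub>\<alpha> \<alpha> \<epsilon>"
abbreviation "samples \<epsilon> \<equiv> Msz V Cost c\<^sub>\<alpha> \<alpha> \<epsilon>"
abbreviation "est_var \<epsilon> \<equiv> mlmc_var V (levels \<epsilon>) (samples \<epsilon>)"

lemma Cost_pos: "0 < Cost l"
  by (rule less_trans[OF _ cost_lower]) (simp add: c_pos)

lemma var_cost_nonneg [simp]: "0 \<le> V l * Cost l"
  using V_nonneg[of l] Cost_pos[of l] by simp

lemma C_pos: "0 < C"
  using var_decay[of 0] V0_pos by simp

lemma C'_pos: "0 < C'"
  using cost_upper[of 0] Cost_pos[of 0] by simp

lemma sqrt_var_cost_le: "sqrt (V l * Cost l) \<le> sqrt (C * C') * exp (- (\<beta> - \<gamma>) / 2) ^ l"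
proof -
  have K: "(sqrt (C * C'))\<^sup>2 = C * C'"
    using C_pos C'_pos by simp
  have q: "(exp (- (\<beta> - \<gamma>) / 2) ^ l)\<^sup>2 = exp (- \<beta> * real l) * exp (\<gamma> * real l)"
    by (simp only: exp_of_nat_mult[symmetric] power2_eq_square exp_add[symmetric]) (simp add: field_simps)
  have "V l * Cost l \<le> (C * exp (- \<beta> * real l)) * (C' * exp (\<gamma> * real l))"
    using var_decay[of l] cost_upper[of l] V_nonneg[of l] Cost_pos[of l] C_pos
    by (intro mult_mono) auto
  also have "\<dots> = (sqrt (C * C') * exp (- (\<beta> - \<gamma>) / 2) ^ l)\<^sup>2"
    unfolding power_mult_distrib K q by (simp add: mult_ac)
  finally have "sqrt (V l * Cost l) \<le> sqrt ((sqrt (C * C') * exp (- (\<beta> - \<gamma>) / 2) ^ l)\<^sup>2)"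
    by (rule real_sqrt_le_mono)
  then show ?thesis
    using C_pos C'_pos by (simp add: real_sqrt_abs abs_of_nonneg)
qed

lemma summable_sqrt_var_cost: "summable (\<lambda>l. sqrt (V l * Cost l))"
proof (rule summable_comparison_test[OF _ summable_mult[OF summable_geometric]])
  show "norm (exp (- (\<beta> - \<gamma>) / 2)) < 1"
    using gamma_less_beta by simp
  show "\<exists>N. \<forall>l\<ge>N. norm (sqrt (V l * Cost l)) \<le> sqrt (C * C') * exp (- (\<beta> - \<gamma>) / 2) ^ l"
    using sqrt_var_cost_le by simp
qed

lemma Ssum_nonneg: "0 \<le> Ssum V Cost k"
  by (simp add: Ssum_def sum_nonneg)

lemma Ssum_bounds:
  shows "sqrt (V 0 * Cost 0) \<le> Ssum V Cost k" and "Ssum V Cost k \<le> (\<Sum>l. sqrt (V l * Cost l))"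
proof -
  show "sqrt (V 0 * Cost 0) \<le> Ssum V Cost k"
    unfolding Ssum_def by (rule member_le_sum[where i=0]) simp_all
  show "Ssum V Cost k \<le> (\<Sum>l. sqrt (V l * Cost l))"
    unfolding Ssum_def atMost_atLeast0 lessThan_Suc_atMost[symmetric]
    by (rule sum_le_suminf[OF summable_sqrt_var_cost]) auto
qed

lemma
  fixes \<epsilon> :: real and l :: nat
  defines "q \<equiv> sqrt (V l / Cost l) * Ssum V Cost (levels \<epsilon>) / \<epsilon>\<^sup>2"
  shows samples_pos: "0 < samples \<epsilon> l"
    and samples_ge: "q \<le> real (samples \<epsilon> l)"
    and samples_le: "real (samples \<epsilon> l) \<le> q + 1"
proof -
  have "0 \<le> q"
    unfolding q_def using V_nonneg[of l] Cost_pos[of l] Ssum_nonneg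
    by (intro divide_nonneg_nonneg mult_nonneg_nonneg) auto
  moreover have "samples \<epsilon> l = nat (max \<lceil>q\<rceil> 1)"
    by (simp add: Msz_def q_def power_int_minus divide_inverse mult_ac)
  ultimately show "0 < samples \<epsilon> l" "q \<le> real (samples \<epsilon> l)" "real (samples \<epsilon> l) \<le> q + 1"
    by (auto simp: max_def)
qed

lemma var_div_samples_le:
  assumes "0 < \<epsilon>"
  shows "V l / real (samples \<epsilon> l) \<le> \<epsilon>\<^sup>2 * sqrt (V l * Cost l) / sqrt (V 0 * Cost 0)"
proof (cases "V l = 0")
  case False
  define S where "S = Ssum V Cost (levels \<epsilon>)"
  have V_pos: "0 < V l" using False V_nonneg[of l] by simp
  have S_ge: "sqrt (V 0 * Cost 0) \<le> S" and s0_pos: "0 < sqrt (V 0 * Cost 0)"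
    using Ssum_bounds(1) V0_pos Cost_pos[of 0] by (auto simp: S_def)
  have S_pos: "0 < S"
    using S_ge s0_pos by linarith
  have q_pos: "0 < sqrt (V l / Cost l) * S / \<epsilon>\<^sup>2"
    using V_pos Cost_pos[of l] S_pos assms by simp
  have "V l / real (samples \<epsilon> l) \<le> V l / (sqrt (V l / Cost l) * S / \<epsilon>\<^sup>2)"
  proof (rule divide_left_mono)
    show "sqrt (V l / Cost l) * S / \<epsilon>\<^sup>2 \<le> real (samples \<epsilon> l)"
      unfolding S_def by (rule samples_ge)
    show "0 < real (samples \<epsilon> l) * (sqrt (V l / Cost l) * S / \<epsilon>\<^sup>2)"
      using samples_pos[where \<epsilon>=\<epsilon> and l=l] q_pos by (intro mult_pos_pos) simp_all
  qed (use V_pos in simp)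
  also have "\<dots> = \<epsilon>\<^sup>2 * sqrt (V l * Cost l) / S"
    using V_pos Cost_pos[of l] S_ge s0_pos
    by (simp add: real_sqrt_divide real_sqrt_mult field_simps)
  also have "\<dots> \<le> \<epsilon>\<^sup>2 * sqrt (V l * Cost l) / sqrt (V 0 * Cost 0)"
    by (rule divide_left_mono[OF S_ge]) (simp_all add: mult_pos_pos[OF S_pos s0_pos])
  finally show ?thesis .
qed simp

lemma est_var_ge_first_level: "V 0 / real (samples \<epsilon> 0) \<le> est_var \<epsilon>"
  unfolding mlmc_var_def using V_nonneg
  by (intro member_le_sum[where i=0 and f="\<lambda>l. V l / real (samples \<epsilon> l)"]) auto

lemma est_var_pos: "0 < est_var \<epsilon>"
proof -
  have "0 < V 0 / real (samples \<epsilon> 0)"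
    using V0_pos samples_pos[where \<epsilon>=\<epsilon> and l=0] by simp
  then show ?thesis
    using est_var_ge_first_level[of \<epsilon>] by linarith
qed

text \<open>As S_L stays bounded, M_0 is at most of order \<epsilon>^-2; hence the term V_0 / M_0 keeps the
  estimator variance at least of order \<epsilon>^2.\<close>

lemma est_var_lower:
  obtains k where "0 < k" and "\<And>\<epsilon>. 0 < \<epsilon> \<Longrightarrow> \<epsilon> \<le> 1 \<Longrightarrow> k * \<epsilon>\<^sup>2 \<le> est_var \<epsilon>"
proof
  define A where "A = sqrt (V 0 / Cost 0) * (\<Sum>l. sqrt (V l * Cost l))"
  have A_nonneg: "0 \<le> A"
    unfolding A_def using V0_pos Cost_pos[of 0] Ssum_bounds[of 0]
    by (intro mult_nonneg_nonneg) (auto intro: order_trans[rotated])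
  show "0 < V 0 / (A + 1)"
    using V0_pos A_nonneg by simp
  fix \<epsilon> :: real
  assume \<epsilon>: "0 < \<epsilon>" "\<epsilon> \<le> 1"
  have "1 \<le> 1 / \<epsilon>\<^sup>2"
    using \<epsilon> by (simp add: power_le_one le_divide_eq)
  have "real (samples \<epsilon> 0) \<le> sqrt (V 0 / Cost 0) * Ssum V Cost (levels \<epsilon>) / \<epsilon>\<^sup>2 + 1"
    by (rule samples_le)
  also have "\<dots> \<le> A / \<epsilon>\<^sup>2 + 1 / \<epsilon>\<^sup>2"
    unfolding A_def using Ssum_bounds(2) V0_pos Cost_pos[of 0] \<open>1 \<le> 1 / \<epsilon>\<^sup>2\<close>
    by (intro add_mono divide_right_mono mult_left_mono) auto
  also have "\<dots> = (A + 1) / \<epsilon>\<^sup>2"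
    by (rule add_divide_distrib[symmetric])
  finally have "V 0 / ((A + 1) / \<epsilon>\<^sup>2) \<le> V 0 / real (samples \<epsilon> 0)"
    using V0_pos samples_pos[where \<epsilon>=\<epsilon> and l=0] A_nonneg \<epsilon> by (intro divide_left_mono) auto
  then show "V 0 / (A + 1) * \<epsilon>\<^sup>2 \<le> est_var \<epsilon>"
    using est_var_ge_first_level[of \<epsilon>] by simp
qed


lemma eventually_dominated_by_summable:
  obtains b where "summable b"
    and "\<forall>\<^sub>F \<epsilon> in at_right 0. \<forall>l. V l / (real (samples \<epsilon> l) * est_var \<epsilon>) \<le> b l"
proof -
  obtain k where k: "0 < k" "\<And>\<epsilon>. 0 < \<epsilon> \<Longrightarrow> \<epsilon> \<le> 1 \<Longrightarrow> k * \<epsilon>\<^sup>2 \<le> est_var \<epsilon>"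
    by (rule est_var_lower) blast
  define s\<^sub>0 where "s\<^sub>0 = sqrt (V 0 * Cost 0)"
  have s\<^sub>0_pos: "0 < s\<^sub>0"
    using V0_pos Cost_pos[of 0] by (simp add: s\<^sub>0_def)
  have "V l / (real (samples \<epsilon> l) * est_var \<epsilon>) \<le> sqrt (V l * Cost l) / (s\<^sub>0 * k)"
    if \<epsilon>: "0 < \<epsilon>" "\<epsilon> \<le> 1" for \<epsilon> l
  proof -
    have "V l / (real (samples \<epsilon> l) * est_var \<epsilon>) = V l / real (samples \<epsilon> l) / est_var \<epsilon>"
      by simp
    also have "\<dots> \<le> \<epsilon>\<^sup>2 * sqrt (V l * Cost l) / s\<^sub>0 / (k * \<epsilon>\<^sup>2)"
      by (rule frac_le) (use var_div_samples_le[OF \<epsilon>(1), of l] k \<epsilon> s\<^sub>0_pos in \<open>auto simp: s\<^sub>0_def\<close>)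
    also have "\<dots> = sqrt (V l * Cost l) / (s\<^sub>0 * k)"
      using \<epsilon>(1) by simp
    finally show ?thesis .
  qed
  then have "\<forall>\<^sub>F \<epsilon> in at_right 0. \<forall>l. V l / (real (samples \<epsilon> l) * est_var \<epsilon>) \<le> sqrt (V l * Cost l) / (s\<^sub>0 * k)"
    by (intro eventually_at_rightI[of 0 1]) auto
  then show thesis
    using that summable_divide[OF summable_sqrt_var_cost] by blast
qed

lemma ratio_le_cost_bound:
  assumes \<epsilon>: "0 < \<epsilon>" and k: "0 < k" "k * \<epsilon>\<^sup>2 \<le> est_var \<epsilon>"
  shows "V l / ((real (samples \<epsilon> l))\<^sup>2 * est_var \<epsilon>) \<le> C' / (V 0 * Cost 0 * k) * \<epsilon>\<^sup>2 * exp (\<gamma> * real l)"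
proof (cases "V l = 0")
  case False
  then have V_pos: "0 < V l"
    using V_nonneg[of l] by simp
  define s\<^sub>0 where "s\<^sub>0 = sqrt (V 0 * Cost 0)"
  have s\<^sub>0_pos: "0 < s\<^sub>0"
    using V0_pos Cost_pos[of 0] by (simp add: s\<^sub>0_def)
  have "V l / ((real (samples \<epsilon> l))\<^sup>2 * est_var \<epsilon>) = (V l / real (samples \<epsilon> l))\<^sup>2 / V l / est_var \<epsilon>"
    using V_pos by (simp add: power2_eq_square)
  also have "\<dots> \<le> (\<epsilon>\<^sup>2 * sqrt (V l * Cost l) / s\<^sub>0)\<^sup>2 / V l / est_var \<epsilon>"
    using var_div_samples_le[OF \<epsilon>, of l] V_pos samples_pos[where \<epsilon>=\<epsilon> and l=l] est_var_pos[of \<epsilon>]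
    by (intro divide_right_mono power_mono) (auto simp: s\<^sub>0_def)
  also have "\<dots> = \<epsilon> ^ 4 * Cost l / s\<^sub>0\<^sup>2 / est_var \<epsilon>"
    using V_pos Cost_pos[of l] by (simp add: power_mult_distrib power_divide flip: power_mult)
  also have "\<dots> \<le> \<epsilon> ^ 4 * (C' * exp (\<gamma> * real l)) / s\<^sub>0\<^sup>2 / (k * \<epsilon>\<^sup>2)"
    using cost_upper[of l] k \<epsilon> s\<^sub>0_pos C'_pos by (intro frac_le divide_right_mono mult_left_mono) auto
  also have "\<dots> = C' / (V 0 * Cost 0 * k) * \<epsilon>\<^sup>2 * exp (\<gamma> * real l)"
    using \<epsilon> k(1) s\<^sub>0_pos by (simp add: s\<^sub>0_def field_simps eval_nat_numeral)
  finally show ?thesis .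
qed (use C'_pos V0_pos Cost_pos[of 0] k(1) in simp)

lemma ratio_le_var_bound:
  assumes \<epsilon>: "0 < \<epsilon>" and k: "0 < k" "k * \<epsilon>\<^sup>2 \<le> est_var \<epsilon>"
  shows "V l / ((real (samples \<epsilon> l))\<^sup>2 * est_var \<epsilon>) \<le> C / k / \<epsilon>\<^sup>2 * exp (- \<beta> * real l)"
proof -
  have "V l / ((real (samples \<epsilon> l))\<^sup>2 * est_var \<epsilon>) \<le> C * exp (- \<beta> * real l) / (k * \<epsilon>\<^sup>2)"
  proof (rule frac_le)
    have "est_var \<epsilon> \<le> (real (samples \<epsilon> l))\<^sup>2 * est_var \<epsilon>"
      using samples_pos[where \<epsilon>=\<epsilon> and l=l] est_var_pos[of \<epsilon>] by (simp add: one_le_power)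
    then show "k * \<epsilon>\<^sup>2 \<le> (real (samples \<epsilon> l))\<^sup>2 * est_var \<epsilon>"
      using k(2) by linarith
  qed (use var_decay[of l] C_pos \<epsilon> k(1) in auto)
  then show ?thesis
    by simp
qed

text \<open>The two bounds above are of order \<epsilon>^2 e^(\<gamma> l) and \<epsilon>^-2 e^(-\<beta> l); log-convex interpolation
  with weight \<beta> / (\<beta> + \<gamma>) removes the dependence on l and leaves a positive power of \<epsilon>.\<close>

lemma ratio_le_powr:
  obtains K q where "0 < q"
    and "\<And>\<epsilon> l. 0 < \<epsilon> \<Longrightarrow> \<epsilon> \<le> 1 \<Longrightarrow> V l / ((real (samples \<epsilon> l))\<^sup>2 * est_var \<epsilon>) \<le> K * \<epsilon> powr q"
proof -
  obtain k where k: "0 < k" "\<And>\<epsilon>. 0 < \<epsilon> \<Longrightarrow> \<epsilon> \<le> 1 \<Longrightarrow> k * \<epsilon>\<^sup>2 \<le> est_var \<epsilon>"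
    by (rule est_var_lower) blast
  define A where "A = C' / (V 0 * Cost 0 * k)"
  define B where "B = C / k"
  define p where "p = \<beta> / (\<beta> + \<gamma>)"
  have A_pos: "0 < A" and B_pos: "0 < B"
    using C_pos C'_pos V0_pos Cost_pos[of 0] k(1) by (simp_all add: A_def B_def)
  have p: "0 \<le> p" "p \<le> 1" "p * \<gamma> = (1 - p) * \<beta>"
    using gamma_pos gamma_less_beta by (simp_all add: p_def field_simps)
  show thesis
  proof (rule that)
    show "0 < 4 * p - 2"
      using gamma_pos gamma_less_beta by (simp add: p_def field_simps)
    fix \<epsilon> :: real and l :: nat
    assume \<epsilon>: "0 < \<epsilon>" "\<epsilon> \<le> 1"
    define x where "x = V l / ((real (samples \<epsilon> l))\<^sup>2 * est_var \<epsilon>)"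
    have "x \<le> A * \<epsilon>\<^sup>2 * exp (\<gamma> * real l)"
      unfolding x_def A_def by (rule ratio_le_cost_bound[OF \<epsilon>(1) k(1) k(2)[OF \<epsilon>]])
    also have "\<dots> = exp (ln (A * \<epsilon>\<^sup>2 * exp (\<gamma> * real l)))"
      using A_pos \<epsilon>(1) by simp
    finally have xA: "x \<le> exp (ln (A * \<epsilon>\<^sup>2 * exp (\<gamma> * real l)))" .
    have "x \<le> B / \<epsilon>\<^sup>2 * exp (- \<beta> * real l)"
      unfolding x_def B_def by (rule ratio_le_var_bound[OF \<epsilon>(1) k(1) k(2)[OF \<epsilon>]])
    also have "\<dots> = exp (ln (B / \<epsilon>\<^sup>2 * exp (- \<beta> * real l)))"
      using B_pos \<epsilon>(1) by simp
    finally have xB: "x \<le> exp (ln (B / \<epsilon>\<^sup>2 * exp (- \<beta> * real l)))" .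
    from xA xB have "x \<le> exp (p * ln (A * \<epsilon>\<^sup>2 * exp (\<gamma> * real l)) + (1 - p) * ln (B / \<epsilon>\<^sup>2 * exp (- \<beta> * real l)))"
      by (rule le_exp_convex_combination[OF _ _ p(1,2)])
    also have "p * ln (A * \<epsilon>\<^sup>2 * exp (\<gamma> * real l)) + (1 - p) * ln (B / \<epsilon>\<^sup>2 * exp (- \<beta> * real l))
        = (p * ln A + (1 - p) * ln B) + (4 * p - 2) * ln \<epsilon> + (p * \<gamma> - (1 - p) * \<beta>) * real l"
      using A_pos B_pos \<epsilon>(1) by (simp add: ln_mult ln_div ln_realpow algebra_simps)
    also have "\<dots> = (p * ln A + (1 - p) * ln B) + (4 * p - 2) * ln \<epsilon>"
      by (simp add: p(3))
    also have "exp \<dots> = exp (p * ln A + (1 - p) * ln B) * \<epsilon> powr (4 * p - 2)"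
      using \<epsilon>(1) by (simp add: exp_add powr_def)
    finally show "x \<le> exp (p * ln A + (1 - p) * ln B) * \<epsilon> powr (4 * p - 2)" .
  qed
qed

lemma max_ratio_tendsto_zero:
  "((\<lambda>\<epsilon>. Max ((\<lambda>l. V l / ((real (samples \<epsilon> l))\<^sup>2 * est_var \<epsilon>)) ` {0..levels \<epsilon>})) \<longlongrightarrow> 0) (at_right 0)"
proof -
  obtain K q where q: "0 < q"
    and bound: "\<And>\<epsilon> l. 0 < \<epsilon> \<Longrightarrow> \<epsilon> \<le> 1 \<Longrightarrow> V l / ((real (samples \<epsilon> l))\<^sup>2 * est_var \<epsilon>) \<le> K * \<epsilon> powr q"
    by (rule ratio_le_powr) blast
  show ?thesis
  proof (rule tendsto_sandwich[where f="\<lambda>_. 0" and h="\<lambda>\<epsilon>. K * \<epsilon> powr q"])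
    show "\<forall>\<^sub>F \<epsilon> in at_right 0. 0 \<le> Max ((\<lambda>l. V l / ((real (samples \<epsilon> l))\<^sup>2 * est_var \<epsilon>)) ` {0..levels \<epsilon>})"
    proof (intro always_eventually allI)
      fix \<epsilon> :: real
      have "0 \<le> V 0 / ((real (samples \<epsilon> 0))\<^sup>2 * est_var \<epsilon>)"
        using V_nonneg[of 0] est_var_pos[of \<epsilon>] by simp
      also have "\<dots> \<le> Max ((\<lambda>l. V l / ((real (samples \<epsilon> l))\<^sup>2 * est_var \<epsilon>)) ` {0..levels \<epsilon>})"
        by (rule Max_ge) auto
      finally show "0 \<le> Max ((\<lambda>l. V l / ((real (samples \<epsilon> l))\<^sup>2 * est_var \<epsilon>)) ` {0..levels \<epsilon>})" .
    qed
    show "\<forall>\<^sub>F \<epsilon> in at_right 0.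
        Max ((\<lambda>l. V l / ((real (samples \<epsilon> l))\<^sup>2 * est_var \<epsilon>)) ` {0..levels \<epsilon>}) \<le> K * \<epsilon> powr q"
      using bound by (intro eventually_at_rightI[of 0 1]) (auto simp: Max_le_iff)
    have "((\<lambda>\<epsilon>. \<epsilon> powr q) \<longlongrightarrow> 0) (at_right (0::real))"
      using q by (intro tendsto_zero_powrI tendsto_ident_at eventually_at_rightI[of 0 1]) auto
    then show "((\<lambda>\<epsilon>. K * \<epsilon> powr q) \<longlongrightarrow> 0) (at_right 0)"
      by (rule tendsto_mult_right_zero)
  qed simp
qed

end


theorem theorem2:
  fixes M :: "'a measure"
    and X :: "'a \<Rightarrow> real"
    and Xs :: "nat \<Rightarrow> 'a \<Rightarrow> real"
    and Y :: "nat \<Rightarrow> nat \<Rightarrow> 'a \<Rightarrow> real"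
    and Cost :: "nat \<Rightarrow> real"
    and \<alpha> \<beta> \<gamma> c\<^sub>\<alpha> C c C' :: real
  defines "V \<equiv> (\<lambda>l. Var M (dX Xs l))"
  assumes P: "prob_space M"
    and X_L2: "X \<in> borel_measurable M" "integrable M (\<lambda>\<omega>. (X \<omega>)\<^sup>2)"
    and Xs_L2: "\<And>l. Xs l \<in> borel_measurable M" "\<And>l. integrable M (\<lambda>\<omega>. (Xs l \<omega>)\<^sup>2)"
    and Y_indep: "prob_space.indep_vars M (\<lambda>_. borel) (\<lambda>(l, i). Y l i) UNIV"
    and Y_law: "\<And>l i. distr M borel (Y l i) = distr M borel (dX Xs l)"
    and pos: "\<alpha> > 0" "\<beta> > 0" "\<gamma> > 0" "c\<^sub>\<alpha> > 0" "C > 0" "c > 0" "c < C'"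
    and min_le: "min \<beta> \<gamma> \<le> 2 * \<alpha>"
    and bias: "\<And>l. \<bar>(\<integral>\<omega>. (X \<omega> - Xs l \<omega>) \<partial>M)\<bar> \<le> c\<^sub>\<alpha> * exp (- \<alpha> * real l)"
    and var_decay: "\<And>l. V l \<le> C * exp (- \<beta> * real l)"
    and cost: "\<And>l. c * exp (\<gamma> * real l) < Cost l" "\<And>l. Cost l < C' * exp (\<gamma> * real l)"
    and beta_gt_gamma: "\<beta> > \<gamma>"
    and V0: "V 0 > 0"
  shows "(\<forall>x::real.
           ((\<lambda>\<epsilon>. measure M {\<omega> \<in> space M.
               (AML Y V Cost c\<^sub>\<alpha> \<alpha> \<epsilon> \<omega> - (\<integral>\<eta>. Xs (Lev c\<^sub>\<alpha> \<alpha> \<epsilon>) \<eta> \<partial>M))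
                 / sqrt (Var M (AML Y V Cost c\<^sub>\<alpha> \<alpha> \<epsilon>)) \<le> x})
             \<longlongrightarrow> Phi x) (at_right 0))
         \<and> ((\<lambda>\<epsilon>. Max ((\<lambda>l. V l / (real (Msz V Cost c\<^sub>\<alpha> \<alpha> \<epsilon> l) ^ 2
                      * Var M (AML Y V Cost c\<^sub>\<alpha> \<alpha> \<epsilon>))) ` {0..Lev c\<^sub>\<alpha> \<alpha> \<epsilon>}))
           \<longlongrightarrow> 0) (at_right 0)"
proof -
  interpret mlmc_sampling M Xs Y
    using P Xs_L2 Y_indep Y_law by (simp add: mlmc_sampling_def mlmc_sampling_axioms_def)
  have V_eq: "level_var = V"
    by (simp add: V_def level_var_def fun_eq_iff)
  interpret rates: mlmc_rates V Cost c\<^sub>\<alpha> \<alpha> \<beta> \<gamma> C c C'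
    using var_decay cost pos beta_gt_gamma V0 level_var_nonneg by unfold_locales (auto simp: V_eq)
  have Var_est: "Var M (mlmc_est Y (Lev c\<^sub>\<alpha> \<alpha> \<epsilon>) (Msz V Cost c\<^sub>\<alpha> \<alpha> \<epsilon>)) = rates.est_var \<epsilon>" for \<epsilon>
    using variance_mlmc_est[OF rates.samples_pos] by (simp add: V_eq)
  obtain b where "summable b"
    and "\<forall>\<^sub>F \<epsilon> in at_right 0. \<forall>l. V l / (real (Msz V Cost c\<^sub>\<alpha> \<alpha> \<epsilon> l) * rates.est_var \<epsilon>) \<le> b l"
    by (rule rates.eventually_dominated_by_summable) blast
  note clt = mlmc_est_clt[unfolded V_eq, OF rates.samples_pos rates.est_var_pos this
      rates.max_ratio_tendsto_zero]
  have Phi: "Phi x = cdf std_normal_distribution x" for x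
    by (simp add: Phi_def cdf_def)
  show ?thesis
    unfolding AML_eq_mlmc_est Phi Var_est
    using clt[unfolded Var_est] rates.max_ratio_tendsto_zero by blast
qed

end
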